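(* Let $L\subseteq\Sigma^\omega$ be a prefix-independent language recognised by some deterministic coBüchi automaton. Let $\mathcal{A}_{\min}$ be a nice, safe minimal and safe centralised history-deterministic coBüchi automaton recognising $L$, with safe components $\mathcal{S}_1,\dots,\mathcal{S}_k$ (with state sets $S_i$ and transition sets $\Delta_i$), and let $n_{\max}=\max_{1\le i\le k}|S_i|$. Let $Q=\{p_1,\dots,p_{n_{\max}}\}$ and, for each $i$, let $\phi_i:S_i\to Q$ be any injective map; extend it to transitions by $\phi_i(q,a,q')=(\phi_i(q),a,\phi_i(q'))$. Let $\mathcal{A}_{\mathrm{PI}}$ be the generalised coBüchi automaton with states $Q$, initial state $p_1$, transitions $\Delta=Q\times\Sigma\times Q$, colours $\{1,\dots,k\}$, and labelling $\mathrm{col}(e)=\{i\in\{1,\dots,k\} : \text{there is no } e'\in\Delta_i \text{ with } \phi_i(e')=e\}$. Then $\mathcal{A}_{\mathrm{PI}}$ is history-deterministic and $\mathcal{L}(\mathcal{A}_{\mathrm{PI}})=L$.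
   Context: An automaton is a tuple $(Q,\Sigma,q_{\mathrm{init}},\Delta,\Gamma,\mathrm{col},W)$ with finite state set, finite input alphabet $\Sigma$, initial state, transitions $\Delta\subseteq Q\times\Sigma\times Q$, output alphabet $\Gamma$, labelling $\mathrm{col}:\Delta\to\Gamma$, acceptance condition $W\subseteq\Gamma^\omega$. A run on $w=a_1a_2\cdots$ is a sequence $(q_0,a_1,q_1)(q_1,a_2,q_2)\cdots$ of transitions with $q_0=q_{\mathrm{init}}$, accepting if its label sequence is in $W$; $\mathcal{L}(\mathcal{A})$ is the set of words with an accepting run. With a finite colour set $C$ and $\Gamma=2^C$, generalised coBüchi means $W=\{x : \text{some } c\in C \text{ occurs in only finitely many letters of } x\}$; a coBüchi automaton is the case $C=\{1\}$, and its coBüchi transitions are those labelled $\{1\}$. A resolver is a map $\sigma:\Sigma^+\to\Delta$ such that for every $w=a_0a_1\cdots$, $\sigma(a_0)\sigma(a_0a_1)\cdots$ is a run on $w$, accepting whenever $w\in\mathcal{L}(\mathcal{A})$; history-deterministic means a resolver exists. $L$ is prefix-independent if for all $u\in\Sigma^*$, $w\in\Sigma^\omega$: $uw\in L\iff w\in L$. For a coBüchi automaton $\mathcal{A}$: $\mathcal{A}_{\mathrm{safe}}$ is obtained by deleting all coBüchi transitions; a safe component is a strongly connected component of $\mathcal{A}_{\mathrm{safe}}$ (a maximal set of states mutually reachable in $\mathcal{A}_{\mathrm{safe}}$, together with the transitions of $\mathcal{A}_{\mathrm{safe}}$ between them); the safe language of a state $q$ is the set of $w\in\Sigma^\omega$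 having an infinite path from $q$ in $\mathcal{A}_{\mathrm{safe}}$; two states are equivalent if the automaton started from each of them recognises the same language. $\mathcal{A}$ is semantically deterministic if whenever $(q,a,p_1),(q,a,p_2)\in\Delta$, $p_1$ and $p_2$ are equivalent; in normal form if every transition between two different safe components is a coBüchi transition; safe deterministic if $\mathcal{A}_{\mathrm{safe}}$ is deterministic; nice if all states are reachable from the initial state and it is semantically deterministic, in normal form and safe deterministic. It is safe centralised if any two equivalent states whose safe languages are comparable under inclusion lie in the same safe component, and safe minimal if any two equivalent states with equal safe languages are equal. *)

theory Defs
  imports Main "HOL-Library.Omega_Words_Fun"
begin

text \<open>The input alphabet Sig is passed as a separate parameter.\<close>

record ('q, 'a, 'c) aut =
  states :: "'q set"
  init   :: 'q
  trans  :: "('q \<times> 'a \<times> 'q) set"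
  col    :: "'q \<times> 'a \<times> 'q \<Rightarrow> 'c"
  acc    :: "'c word set"

definition wf_aut :: "'a set \<Rightarrow> ('q, 'a, 'c) aut \<Rightarrow> bool" where
  "wf_aut Sig A \<longleftrightarrow> finite Sig \<and> finite (states A) \<and> init A \<in> states A
     \<and> trans A \<subseteq> states A \<times> Sig \<times> states A"

definition omega_words :: "'a set \<Rightarrow> 'a word set" where
  "omega_words Sig = {w. \<forall>i. w i \<in> Sig}"

definition is_path :: "('q \<times> 'a \<times> 'q) set \<Rightarrow> 'q \<Rightarrow> 'a word \<Rightarrow> ('q \<times> 'a \<times> 'q) word \<Rightarrow> bool" where
  "is_path T q w r \<longleftrightarrow> fst (r 0) = q \<and>
     (\<forall>i. r i \<in> T \<and> fst (snd (r i)) = w i \<and> snd (snd (r i)) = fst (r (Suc i)))"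

definition is_run :: "('q, 'a, 'c) aut \<Rightarrow> 'a word \<Rightarrow> ('q \<times> 'a \<times> 'q) word \<Rightarrow> bool" where
  "is_run A w r \<longleftrightarrow> is_path (trans A) (init A) w r"

definition accepting :: "('q, 'a, 'c) aut \<Rightarrow> ('q \<times> 'a \<times> 'q) word \<Rightarrow> bool" where
  "accepting A r \<longleftrightarrow> (col A \<circ> r) \<in> acc A"

definition lang :: "'a set \<Rightarrow> ('q, 'a, 'c) aut \<Rightarrow> 'a word set" where
  "lang Sig A = {w \<in> omega_words Sig. \<exists>r. is_run A w r \<and> accepting A r}"

definition is_resolver :: "'a set \<Rightarrow> ('q, 'a, 'c) aut \<Rightarrow> ('a list \<Rightarrow> 'q \<times> 'a \<times> 'q) \<Rightarrow> bool" where
  "is_resolver Sig A \<sigma> \<longleftrightarrow> (\<forall>w \<in> omega_words Sig.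
      is_run A w (\<lambda>i. \<sigma> (prefix (Suc i) w)) \<and>
      (w \<in> lang Sig A \<longrightarrow> accepting A (\<lambda>i. \<sigma> (prefix (Suc i) w))))"

definition history_deterministic :: "'a set \<Rightarrow> ('q, 'a, 'c) aut \<Rightarrow> bool" where
  "history_deterministic Sig A \<longleftrightarrow> (\<exists>\<sigma>. is_resolver Sig A \<sigma>)"

definition prefix_independent :: "'a set \<Rightarrow> 'a word set \<Rightarrow> bool" where
  "prefix_independent Sig L \<longleftrightarrow>
     (\<forall>u \<in> lists Sig. \<forall>w \<in> omega_words Sig. (u \<frown> w \<in> L \<longleftrightarrow> w \<in> L))"

definition deterministic_trans :: "('q \<times> 'a \<times> 'q) set \<Rightarrow> bool" where
  "deterministic_trans T \<longleftrightarrow> (\<forall>q a p1 p2. (q, a, p1) \<in> T \<and> (q, a, p2) \<in> T \<longrightarrow> p1 = p2)"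

definition deterministic :: "('q, 'a, 'c) aut \<Rightarrow> bool" where
  "deterministic A \<longleftrightarrow> deterministic_trans (trans A)"

definition gen_coBuchi :: "'k set \<Rightarrow> 'k set word set" where
  "gen_coBuchi C = {x. \<exists>c \<in> C. finite {i. c \<in> x i}}"

definition coBuchi_aut :: "('q, 'a, nat set) aut \<Rightarrow> bool" where
  "coBuchi_aut A \<longleftrightarrow> acc A = gen_coBuchi {1::nat} \<and> (\<forall>e \<in> trans A. col A e \<subseteq> {1})"

definition safe_trans :: "('q, 'a, nat set) aut \<Rightarrow> ('q \<times> 'a \<times> 'q) set" where
  "safe_trans A = {e \<in> trans A. col A e \<noteq> {1}}"

definition safe_rel :: "('q, 'a, nat set) aut \<Rightarrow> ('q \<times> 'q) set" where
  "safe_rel A = {(q, p). \<exists>a. (q, a, p) \<in> safe_trans A}"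

definition same_safe_comp :: "('q, 'a, nat set) aut \<Rightarrow> 'q \<Rightarrow> 'q \<Rightarrow> bool" where
  "same_safe_comp A q p \<longleftrightarrow> q \<in> states A \<and> p \<in> states A \<and>
     (q, p) \<in> (safe_rel A)\<^sup>* \<and> (p, q) \<in> (safe_rel A)\<^sup>*"

definition safe_component :: "('q, 'a, nat set) aut \<Rightarrow> 'q set \<Rightarrow> bool" where
  "safe_component A S \<longleftrightarrow> (\<exists>q \<in> states A. S = {p. same_safe_comp A q p})"

definition comp_trans :: "('q, 'a, nat set) aut \<Rightarrow> 'q set \<Rightarrow> ('q \<times> 'a \<times> 'q) set" where
  "comp_trans A S = {(q, a, p) \<in> safe_trans A. q \<in> S \<and> p \<in> S}"

definition safe_lang :: "'a set \<Rightarrow> ('q, 'a, nat set) aut \<Rightarrow> 'q \<Rightarrow> 'a word set" where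
  "safe_lang Sig A q = {w \<in> omega_words Sig. \<exists>r. is_path (safe_trans A) q w r}"

definition lang_from :: "'a set \<Rightarrow> ('q, 'a, 'c) aut \<Rightarrow> 'q \<Rightarrow> 'a word set" where
  "lang_from Sig A q = lang Sig (A\<lparr>init := q\<rparr>)"

definition equiv_states :: "'a set \<Rightarrow> ('q, 'a, 'c) aut \<Rightarrow> 'q \<Rightarrow> 'q \<Rightarrow> bool" where
  "equiv_states Sig A q p \<longleftrightarrow> lang_from Sig A q = lang_from Sig A p"

definition all_reachable :: "('q, 'a, 'c) aut \<Rightarrow> bool" where
  "all_reachable A \<longleftrightarrow> (\<forall>q \<in> states A. (init A, q) \<in> {(q, p). \<exists>a. (q, a, p) \<in> trans A}\<^sup>*)"

definition semantically_deterministic :: "'a set \<Rightarrow> ('q, 'a, 'c) aut \<Rightarrow> bool" where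
  "semantically_deterministic Sig A \<longleftrightarrow>
     (\<forall>q a p1 p2. (q, a, p1) \<in> trans A \<and> (q, a, p2) \<in> trans A \<longrightarrow> equiv_states Sig A p1 p2)"

definition normal_form :: "('q, 'a, nat set) aut \<Rightarrow> bool" where
  "normal_form A \<longleftrightarrow> (\<forall>q a p. (q, a, p) \<in> trans A \<and> \<not> same_safe_comp A q p \<longrightarrow> col A (q, a, p) = {1})"

definition safe_deterministic :: "('q, 'a, nat set) aut \<Rightarrow> bool" where
  "safe_deterministic A \<longleftrightarrow> deterministic_trans (safe_trans A)"

definition nice :: "'a set \<Rightarrow> ('q, 'a, nat set) aut \<Rightarrow> bool" where
  "nice Sig A \<longleftrightarrow> all_reachable A \<and> semantically_deterministic Sig A \<and> normal_form A
     \<and> safe_deterministic A"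

definition safe_centralised :: "'a set \<Rightarrow> ('q, 'a, nat set) aut \<Rightarrow> bool" where
  "safe_centralised Sig A \<longleftrightarrow> (\<forall>q \<in> states A. \<forall>p \<in> states A.
     equiv_states Sig A q p \<and> (safe_lang Sig A q \<subseteq> safe_lang Sig A p \<or> safe_lang Sig A p \<subseteq> safe_lang Sig A q)
     \<longrightarrow> same_safe_comp A q p)"

definition safe_minimal :: "'a set \<Rightarrow> ('q, 'a, nat set) aut \<Rightarrow> bool" where
  "safe_minimal Sig A \<longleftrightarrow> (\<forall>q \<in> states A. \<forall>p \<in> states A.
     equiv_states Sig A q p \<and> safe_lang Sig A q = safe_lang Sig A p \<longrightarrow> q = p)"

text \<open>States Q = {1..nmax} (p_j is j), initial state 1, all transitions,
  colours {1..k}; S i is the i-th safe component of A, phi i the injection S i -> Q.\<close>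
definition A_PI :: "'a set \<Rightarrow> ('q, 'a, nat set) aut \<Rightarrow> nat \<Rightarrow> nat \<Rightarrow> (nat \<Rightarrow> 'q set)
    \<Rightarrow> (nat \<Rightarrow> 'q \<Rightarrow> nat) \<Rightarrow> (nat, 'a, nat set) aut" where
  "A_PI Sig A k nmax S phi = \<lparr>
     states = {1..nmax},
     init = 1,
     trans = {1..nmax} \<times> Sig \<times> {1..nmax},
     col = (\<lambda>e. {i \<in> {1..k}. \<not> (\<exists>(q, a, q') \<in> comp_trans A (S i). (phi i q, a, phi i q') = e)}),
     acc = gen_coBuchi {1..k} \<rparr>"

end

theory Submission
  imports Defs
begin

text \<open>
  If a run of \<open>A_PI\<close> sees colour \<open>i\<close> only finitely often, it is eventually
  the \<open>\<phi>\<^sub>i\<close>-image of transitions of the safe component \<open>S\<^sub>i\<close>; as \<open>\<phi>\<^sub>i\<close> is injective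
  these glue to a safe path of \<open>A\<^sub>m\<^sub>i\<^sub>n\<close>, whose word is accepted from a reachable
  state, so by prefix independence the whole word lies in \<open>L\<close>. Conversely, a
  resolver of \<open>A\<^sub>m\<^sub>i\<^sub>n\<close> is transported along the map that is \<open>\<phi>\<^sub>i\<close> on \<open>S\<^sub>i\<close>:
  an accepting run of \<open>A\<^sub>m\<^sub>i\<^sub>n\<close> is eventually safe, hence by the normal form
  eventually inside one component \<open>S\<^sub>i\<close>, and then its image avoids colour \<open>i\<close>.
\<close>

lemma gen_coBuchi_iff_MOST: "x \<in> gen_coBuchi C \<longleftrightarrow> (\<exists>c\<in>C. MOST i. c \<notin> x i)"
  unfolding gen_coBuchi_def MOST_iff_cofinite by simp

lemma omega_words_build_iff [simp]:
  "a ## w \<in> omega_words Sig \<longleftrightarrow> a \<in> Sig \<and> w \<in> omega_words Sig"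
proof -
  have "(\<forall>i. (a ## w) i \<in> Sig) \<longleftrightarrow> (a ## w) 0 \<in> Sig \<and> (\<forall>i. (a ## w) (Suc i) \<in> Sig)"
    by (metis not0_implies_Suc)
  then show ?thesis unfolding omega_words_def by simp
qed

lemma omega_words_suffix: "w \<in> omega_words Sig \<Longrightarrow> suffix n w \<in> omega_words Sig"
  unfolding omega_words_def by simp

lemma prefix_in_lists: "w \<in> omega_words Sig \<Longrightarrow> prefix n w \<in> lists Sig"
  unfolding omega_words_def by auto

lemma is_path_mono: "is_path T q w r \<Longrightarrow> T \<subseteq> T' \<Longrightarrow> is_path T' q w r"
  unfolding is_path_def by blast

lemma is_path_suffix: "is_path T q w r \<Longrightarrow> is_path T (fst (r n)) (suffix n w) (suffix n r)"
  unfolding is_path_def by simp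

lemma is_path_build:
  assumes "(q, a, p) \<in> T" "is_path T p w r"
  shows "is_path T q (a ## w) ((q, a, p) ## r)"
  unfolding is_path_def
proof (intro conjI allI)
  fix i show "((q, a, p) ## r) i \<in> T" "fst (snd (((q, a, p) ## r) i)) = (a ## w) i"
    "snd (snd (((q, a, p) ## r) i)) = fst (((q, a, p) ## r) (Suc i))"
    using assms unfolding is_path_def by (cases i; simp)+
qed simp

lemma mem_lang_from_iff:
  "w \<in> lang_from Sig A q \<longleftrightarrow>
     w \<in> omega_words Sig \<and> (\<exists>r. is_path (trans A) q w r \<and> accepting A r)"
  unfolding lang_from_def lang_def is_run_def accepting_def by simp

lemma lang_from_init: "lang_from Sig A (init A) = lang Sig A"
  unfolding lang_from_def by simp

lemma prefix_independent_suffix_iff: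
  assumes "prefix_independent Sig L" "w \<in> omega_words Sig"
  shows "suffix n w \<in> L \<longleftrightarrow> w \<in> L"
proof -
  have "prefix n w \<in> lists Sig" "suffix n w \<in> omega_words Sig"
    using assms(2) by (simp_all add: prefix_in_lists omega_words_suffix)
  then show ?thesis
    using assms(1) prefix_suffix[of w n] unfolding prefix_independent_def by metis
qed

lemma coBuchi_accepting_iff:
  "coBuchi_aut A \<Longrightarrow> accepting A r \<longleftrightarrow> (MOST i. 1 \<notin> col A (r i))"
  unfolding coBuchi_aut_def accepting_def by (simp add: gen_coBuchi_iff_MOST)

lemma coBuchi_safe_trans_iff:
  "coBuchi_aut A \<Longrightarrow> e \<in> safe_trans A \<longleftrightarrow> e \<in> trans A \<and> 1 \<notin> col A e"
  unfolding coBuchi_aut_def safe_trans_def by (auto dest: subset_singletonD)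

lemma coBuchi_accepting_path_eventually_safe:
  assumes "coBuchi_aut A" "is_path (trans A) q w r" "accepting A r"
  shows "MOST i. r i \<in> safe_trans A"
  using assms by (simp add: coBuchi_accepting_iff coBuchi_safe_trans_iff is_path_def)

lemma coBuchi_safe_lang_subset_lang_from:
  assumes "coBuchi_aut A"
  shows "safe_lang Sig A q \<subseteq> lang_from Sig A q"
proof
  fix w assume "w \<in> safe_lang Sig A q"
  then obtain r where w: "w \<in> omega_words Sig" and r: "is_path (safe_trans A) q w r"
    unfolding safe_lang_def by blast
  have "r i \<in> safe_trans A" for i
    using r unfolding is_path_def by blast
  then have "is_path (trans A) q w r" "accepting A r"
    using assms r by (auto simp: coBuchi_accepting_iff coBuchi_safe_trans_iff intro: is_path_mono)
  then show "w \<in> lang_from Sig A q"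
    using w by (auto simp: mem_lang_from_iff)
qed

lemma coBuchi_lang_from_build:
  assumes "coBuchi_aut A" "(q, a, p) \<in> trans A" "a \<in> Sig" "w \<in> lang_from Sig A p"
  shows "a ## w \<in> lang_from Sig A q"
proof -
  obtain r where w: "w \<in> omega_words Sig" and r: "is_path (trans A) p w r" "accepting A r"
    using assms(4) by (auto simp: mem_lang_from_iff)
  have "accepting A ((q, a, p) ## r)"
    using r(2) assms(1) MOST_Suc_iff[where P = "\<lambda>i. 1 \<notin> col A (((q, a, p) ## r) i)"]
    by (simp add: coBuchi_accepting_iff)
  then show ?thesis
    using is_path_build[OF assms(2) r(1)] w assms(3) by (auto simp: mem_lang_from_iff)
qed

lemma coBuchi_lang_from_reachable:
  assumes "coBuchi_aut A" "wf_aut Sig A"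
    and "(p, q) \<in> {(q, p). \<exists>a. (q, a, p) \<in> trans A}\<^sup>*" "v \<in> lang_from Sig A q"
  shows "\<exists>u \<in> lists Sig. u \<frown> v \<in> lang_from Sig A p"
  using assms(3,4)
proof (induction rule: converse_rtrancl_induct)
  case base
  have "[] \<frown> v \<in> lang_from Sig A q"
    using base by simp
  then show ?case
    by blast
next
  case (step p' q')
  then obtain u where u: "u \<in> lists Sig" "u \<frown> v \<in> lang_from Sig A q'"
    by blast
  obtain a where a: "(p', a, q') \<in> trans A"
    using step(1) by blast
  then have "a \<in> Sig"
    using assms(2) unfolding wf_aut_def by blast
  then have "(a # u) \<frown> v \<in> lang_from Sig A p'"
    using coBuchi_lang_from_build[OF assms(1) a _ u(2)] by simp
  then show ?case
    using u(1) \<open>a \<in> Sig\<close> by (intro bexI[of _ "a # u"]) simp_all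
qed

lemma coBuchi_lang_from_subset_if_prefix_independent:
  assumes "coBuchi_aut A" "wf_aut Sig A" "all_reachable A"
    and "prefix_independent Sig (lang Sig A)" "q \<in> states A"
  shows "lang_from Sig A q \<subseteq> lang Sig A"
proof
  fix v assume v: "v \<in> lang_from Sig A q"
  have "(init A, q) \<in> {(q, p). \<exists>a. (q, a, p) \<in> trans A}\<^sup>*"
    using assms(3,5) unfolding all_reachable_def by blast
  then obtain u where "u \<in> lists Sig" "u \<frown> v \<in> lang_from Sig A (init A)"
    using coBuchi_lang_from_reachable[OF assms(1,2) _ v] by blast
  moreover have "v \<in> omega_words Sig"
    using v by (simp add: mem_lang_from_iff)
  ultimately show "v \<in> lang Sig A"
    using assms(4) unfolding prefix_independent_def lang_from_init by blast
qed

lemma safe_component_eq: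
  assumes "safe_component A C" "q \<in> C"
  shows "C = {p. same_safe_comp A q p}"
proof -
  obtain q0 where C: "C = {p. same_safe_comp A q0 p}"
    using assms(1) unfolding safe_component_def by blast
  then have "same_safe_comp A q0 q"
    using assms(2) by blast
  then show ?thesis
    unfolding C same_safe_comp_def by (blast intro: rtrancl_trans)
qed

lemma safe_component_index_unique:
  assumes "\<forall>i \<in> I. safe_component A (S i)" "inj_on S I"
    and "i \<in> I" "j \<in> I" "q \<in> S i" "q \<in> S j"
  shows "i = j"
  using assms safe_component_eq[of A "S i" q] safe_component_eq[of A "S j" q]
  by (metis inj_onD)

lemma normal_form_safe_trans_in_component:
  assumes "normal_form A" "safe_component A C" "q \<in> C" "(q, a, p) \<in> safe_trans A"
  shows "p \<in> C"
proof -
  have "same_safe_comp A q p"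
    using assms(1,4) unfolding normal_form_def safe_trans_def by blast
  then show ?thesis
    using safe_component_eq[OF assms(2,3)] by blast
qed

lemma normal_form_eventually_safe_path_in_component:
  assumes "normal_form A" "wf_aut Sig A" "is_path (trans A) q w r"
    and "MOST t. r t \<in> safe_trans A"
  obtains C where "safe_component A C" "MOST t. r t \<in> comp_trans A C"
proof -
  obtain N where N: "\<forall>t\<ge>N. r t \<in> safe_trans A"
    using assms(4) unfolding MOST_nat_le by blast
  have r: "r t \<in> trans A" "snd (snd (r t)) = fst (r (Suc t))" for t
    using assms(3) unfolding is_path_def by auto
  define C where "C = {p. same_safe_comp A (fst (r N)) p}"
  have "fst (r N) \<in> states A"
    using r(1)[of N] assms(2) unfolding wf_aut_def by auto
  then have C_comp: "safe_component A C"
    unfolding C_def safe_component_def by blast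
  have in_C: "fst (r t) \<in> C" if "N \<le> t" for t
    using that
  proof (induction t rule: dec_induct)
    case base
    have "same_safe_comp A (fst (r N)) (fst (r N))"
      using \<open>fst (r N) \<in> states A\<close> unfolding same_safe_comp_def by simp
    then show ?case
      unfolding C_def by simp
  next
    case (step t)
    have "(fst (r t), fst (snd (r t)), fst (r (Suc t))) \<in> safe_trans A"
      using N step(1) r(2)[of t] by (metis prod.collapse)
    then show ?case
      using normal_form_safe_trans_in_component[OF assms(1) C_comp step(3)] by blast
  qed
  have "r t \<in> comp_trans A C" if "N \<le> t" for t
    using N that in_C[of t] in_C[of "Suc t"] r(2)[of t]
    unfolding comp_trans_def by (cases "r t") auto
  then show thesis
    using that C_comp unfolding MOST_nat_le by blast
qed

definition map_trans :: "('q \<Rightarrow> 'p) \<Rightarrow> 'q \<times> 'a \<times> 'q \<Rightarrow> 'p \<times> 'a \<times> 'p" where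
  "map_trans f = (\<lambda>(q, a, p). (f q, a, f p))"

lemma map_trans_sel [simp]:
  "fst (map_trans f e) = f (fst e)" "fst (snd (map_trans f e)) = fst (snd e)"
  "snd (snd (map_trans f e)) = f (snd (snd e))"
  unfolding map_trans_def by (simp_all split: prod.split)

lemma map_trans_cong:
  "f (fst e) = g (fst e) \<Longrightarrow> f (snd (snd e)) = g (snd (snd e)) \<Longrightarrow> map_trans f e = map_trans g e"
  by (cases e) (simp add: map_trans_def)

lemma accepting_A_PI_iff:
  "accepting (A_PI Sig A k M S phi) r \<longleftrightarrow>
     (\<exists>i \<in> {1..k}. MOST t. r t \<in> map_trans (phi i) ` comp_trans A (S i))"
proof -
  have "col (A_PI Sig A k M S phi) e = {i \<in> {1..k}. e \<notin> map_trans (phi i) ` comp_trans A (S i)}" for e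
    unfolding A_PI_def by (force simp: map_trans_def)
  then show ?thesis
    unfolding accepting_def by (simp add: A_PI_def gen_coBuchi_iff_MOST)
qed

lemma is_path_pullback:
  assumes "inj_on f X" "T \<subseteq> X \<times> UNIV \<times> X"
    and "is_path T' p w r" "\<forall>t. r t \<in> map_trans f ` T"
  obtains q \<rho> where "is_path T q w \<rho>"
proof -
  have "\<forall>t. \<exists>e \<in> T. r t = map_trans f e"
    using assms(4) by (simp add: image_iff)
  then obtain \<rho> where \<rho>: "\<And>t. \<rho> t \<in> T" "\<And>t. map_trans f (\<rho> t) = r t"
    unfolding Bex_def by (metis (mono_tags) choice)
  have "is_path T (fst (\<rho> 0)) w \<rho>"
    unfolding is_path_def
  proof (intro conjI allI)
    fix t
    have r: "fst (snd (r t)) = w t" "snd (snd (r t)) = fst (r (Suc t))"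
      using assms(3) unfolding is_path_def by blast+
    show "\<rho> t \<in> T"
      by (fact \<rho>(1))
    show "fst (snd (\<rho> t)) = w t"
      using r(1) by (simp flip: \<rho>(2))
    have "f (snd (snd (\<rho> t))) = f (fst (\<rho> (Suc t)))"
      using r(2) by (simp flip: \<rho>(2))
    moreover have "snd (snd (\<rho> t)) \<in> X" "fst (\<rho> (Suc t)) \<in> X"
      using \<rho>(1)[of t] \<rho>(1)[of "Suc t"] assms(2) by (auto simp: mem_Times_iff)
    ultimately show "snd (snd (\<rho> t)) = fst (\<rho> (Suc t))"
      using assms(1) by (simp add: inj_on_eq_iff)
  qed simp
  then show thesis ..
qed

lemma lang_A_PI_subset:
  assumes "coBuchi_aut A" "wf_aut Sig A" "all_reachable A"
    and "prefix_independent Sig (lang Sig A)"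
    and "\<forall>i \<in> {1..k}. inj_on (phi i) (S i)"
  shows "lang Sig (A_PI Sig A k M S phi) \<subseteq> lang Sig A"
proof
  fix w assume "w \<in> lang Sig (A_PI Sig A k M S phi)"
  then obtain r where w: "w \<in> omega_words Sig"
    and r: "is_path (trans (A_PI Sig A k M S phi)) 1 w r" "accepting (A_PI Sig A k M S phi) r"
    unfolding lang_def is_run_def by (auto simp: A_PI_def)
  then obtain i N where i: "i \<in> {1..k}"
    and N: "\<forall>t\<ge>N. r t \<in> map_trans (phi i) ` comp_trans A (S i)"
    unfolding accepting_A_PI_iff MOST_nat_le by blast
  have "comp_trans A (S i) \<subseteq> S i \<times> UNIV \<times> S i"
    unfolding comp_trans_def by auto
  moreover have "\<forall>t. suffix N r t \<in> map_trans (phi i) ` comp_trans A (S i)"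
    using N by simp
  ultimately obtain q \<rho> where \<rho>: "is_path (comp_trans A (S i)) q (suffix N w) \<rho>"
    using is_path_pullback[OF _ _ is_path_suffix[OF r(1)]] assms(5) i by metis
  have comp_safe: "comp_trans A (S i) \<subseteq> safe_trans A"
    unfolding comp_trans_def by auto
  have "\<rho> 0 \<in> trans A" "fst (\<rho> 0) = q"
    using \<rho> comp_safe unfolding is_path_def safe_trans_def by auto
  then have "q \<in> states A"
    using assms(2) unfolding wf_aut_def by auto
  have "suffix N w \<in> safe_lang Sig A q"
    using \<rho> is_path_mono[OF \<rho> comp_safe] omega_words_suffix[OF w]
    unfolding safe_lang_def by blast
  then have "suffix N w \<in> lang Sig A"
    using coBuchi_safe_lang_subset_lang_from[OF assms(1)]
      coBuchi_lang_from_subset_if_prefix_independent[OF assms(1-4) \<open>q \<in> states A\<close>] by blast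
  then show "w \<in> lang Sig A"
    using prefix_independent_suffix_iff[OF assms(4) w] by blast
qed

definition comp_embedding :: "nat \<Rightarrow> (nat \<Rightarrow> 'q set) \<Rightarrow> (nat \<Rightarrow> 'q \<Rightarrow> nat) \<Rightarrow> 'q \<Rightarrow> nat" where
  "comp_embedding k S phi q = phi (SOME i. i \<in> {1..k} \<and> q \<in> S i) q"

lemma comp_embedding_eq:
  assumes "\<forall>i \<in> {1..k}. safe_component A (S i)" "inj_on S {1..k}"
    and "i \<in> {1..k}" "q \<in> S i"
  shows "comp_embedding k S phi q = phi i q"
proof -
  have "(SOME i. i \<in> {1..k} \<and> q \<in> S i) = i"
    using assms safe_component_index_unique[OF assms(1,2)] by (intro some_equality) auto
  then show ?thesis
    unfolding comp_embedding_def by simp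
qed

lemma comp_embedding_in_range:
  assumes "\<forall>C. safe_component A C \<longrightarrow> C \<in> S ` {1..k}"
    and "\<forall>i \<in> {1..k}. phi i ` S i \<subseteq> Q" "q \<in> states A"
  shows "comp_embedding k S phi q \<in> Q"
proof -
  have "same_safe_comp A q q"
    using assms(3) unfolding same_safe_comp_def by simp
  moreover have "safe_component A {p. same_safe_comp A q p}"
    using assms(3) unfolding safe_component_def by blast
  ultimately have "\<exists>i. i \<in> {1..k} \<and> q \<in> S i"
    using assms(1) by fastforce
  then show ?thesis
    unfolding comp_embedding_def using assms(2) by (metis (mono_tags, lifting) image_subset_iff someI_ex)
qed

text \<open>
  The first transition has to leave the initial state \<open>1\<close> of \<open>A_PI\<close>, which need not
  be the image of the initial state; this is harmless since \<open>A_PI\<close> has all transitions.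
\<close>

definition PI_resolver ::
    "('a list \<Rightarrow> 'q \<times> 'a \<times> 'q) \<Rightarrow> ('q \<Rightarrow> nat) \<Rightarrow> 'a list \<Rightarrow> nat \<times> 'a \<times> nat" where
  "PI_resolver \<sigma> f xs =
     (if length xs \<le> 1 then (1, fst (snd (\<sigma> xs)), f (snd (snd (\<sigma> xs)))) else map_trans f (\<sigma> xs))"

lemma PI_resolver_sel [simp]:
  "fst (PI_resolver \<sigma> f xs) = (if length xs \<le> 1 then 1 else f (fst (\<sigma> xs)))"
  "fst (snd (PI_resolver \<sigma> f xs)) = fst (snd (\<sigma> xs))"
  "snd (snd (PI_resolver \<sigma> f xs)) = f (snd (snd (\<sigma> xs)))"
  unfolding PI_resolver_def by simp_all

lemma PI_resolver_eq: "1 < length xs \<Longrightarrow> PI_resolver \<sigma> f xs = map_trans f (\<sigma> xs)"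
  unfolding PI_resolver_def by simp

lemma PI_resolver_is_run:
  assumes "wf_aut Sig A" "is_resolver Sig A \<sigma>" "f ` states A \<subseteq> {1..M}" "1 \<le> M"
    and "w \<in> omega_words Sig"
  shows "is_run (A_PI Sig A k M S phi) w (\<lambda>t. PI_resolver \<sigma> f (prefix (Suc t) w))"
proof -
  have \<sigma>: "is_path (trans A) (init A) w (\<lambda>t. \<sigma> (prefix (Suc t) w))"
    using assms(2,5) unfolding is_resolver_def is_run_def by blast
  show ?thesis
    unfolding is_run_def is_path_def
  proof (intro conjI allI)
    fix t
    have "\<sigma> (prefix (Suc t) w) \<in> states A \<times> Sig \<times> states A"
      using \<sigma> assms(1) unfolding is_path_def wf_aut_def by blast
    then show "PI_resolver \<sigma> f (prefix (Suc t) w) \<in> trans (A_PI Sig A k M S phi)"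
      using assms(3,4) unfolding PI_resolver_def A_PI_def by (auto simp: mem_Times_iff)
    show "fst (snd (PI_resolver \<sigma> f (prefix (Suc t) w))) = w t"
      using \<sigma> unfolding is_path_def by simp
    have "snd (snd (\<sigma> (prefix (Suc t) w))) = fst (\<sigma> (prefix (Suc (Suc t)) w))"
      using \<sigma> unfolding is_path_def by blast
    then show "snd (snd (PI_resolver \<sigma> f (prefix (Suc t) w)))
        = fst (PI_resolver \<sigma> f (prefix (Suc (Suc t)) w))"
      by simp
  qed (simp add: A_PI_def)
qed

lemma PI_resolver_accepting:
  assumes "coBuchi_aut A" "wf_aut Sig A" "normal_form A" "is_resolver Sig A \<sigma>"
    and "\<forall>i \<in> {1..k}. safe_component A (S i)" "inj_on S {1..k}"
    and "\<forall>C. safe_component A C \<longrightarrow> C \<in> S ` {1..k}"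
    and "w \<in> lang Sig A"
  shows "accepting (A_PI Sig A k M S phi)
    (\<lambda>t. PI_resolver \<sigma> (comp_embedding k S phi) (prefix (Suc t) w))"
proof -
  let ?\<rho> = "\<lambda>t. \<sigma> (prefix (Suc t) w)"
  have "w \<in> omega_words Sig"
    using assms(8) unfolding lang_def by blast
  then have \<rho>: "is_path (trans A) (init A) w ?\<rho>" "accepting A ?\<rho>"
    using assms(4,8) unfolding is_resolver_def is_run_def by blast+
  then have "MOST t. ?\<rho> t \<in> safe_trans A"
    by (rule coBuchi_accepting_path_eventually_safe[OF assms(1)])
  then obtain C where "safe_component A C" "MOST t. ?\<rho> t \<in> comp_trans A C"
    using normal_form_eventually_safe_path_in_component[OF assms(3,2) \<rho>(1)] by blast
  then obtain i where i: "i \<in> {1..k}" and in_S_i: "MOST t. ?\<rho> t \<in> comp_trans A (S i)"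
    using assms(7) by blast
  have resolver_in: "PI_resolver \<sigma> (comp_embedding k S phi) (prefix (Suc t) w)
      \<in> map_trans (phi i) ` comp_trans A (S i)" if "t \<noteq> 0" "?\<rho> t \<in> comp_trans A (S i)" for t
  proof -
    have "fst (?\<rho> t) \<in> S i" "snd (snd (?\<rho> t)) \<in> S i"
      using that(2) by (cases "?\<rho> t"; simp add: comp_trans_def)+
    then have "map_trans (comp_embedding k S phi) (?\<rho> t) = map_trans (phi i) (?\<rho> t)"
      using comp_embedding_eq[OF assms(5,6) i] by (intro map_trans_cong)
    moreover have "PI_resolver \<sigma> (comp_embedding k S phi) (prefix (Suc t) w)
        = map_trans (comp_embedding k S phi) (?\<rho> t)"
      using that(1) by (intro PI_resolver_eq) simp
    ultimately show ?thesis
      using imageI[OF that(2), of "map_trans (phi i)"] by simp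
  qed
  have "MOST t. t \<noteq> 0 \<and> ?\<rho> t \<in> comp_trans A (S i)"
    by (rule MOST_conjI[OF MOST_neq(1) in_S_i])
  then have "MOST t. PI_resolver \<sigma> (comp_embedding k S phi) (prefix (Suc t) w)
      \<in> map_trans (phi i) ` comp_trans A (S i)"
    by (rule MOST_mono) (blast intro: resolver_in)
  then show ?thesis
    unfolding accepting_A_PI_iff using i by blast
qed

lemma is_resolver_if_runs_accept:
  assumes "lang Sig B \<subseteq> lang Sig A"
    and "\<And>w. w \<in> omega_words Sig \<Longrightarrow> is_run B w (\<lambda>t. \<tau> (prefix (Suc t) w))"
    and "\<And>w. w \<in> lang Sig A \<Longrightarrow> accepting B (\<lambda>t. \<tau> (prefix (Suc t) w))"
  shows "is_resolver Sig B \<tau> \<and> lang Sig B = lang Sig A"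
proof -
  have "lang Sig A \<subseteq> lang Sig B"
    using assms(2,3) unfolding lang_def by blast
  then show ?thesis
    using assms unfolding is_resolver_def by blast
qed

theorem proposition20:
  fixes Sig :: "'a set"
    and L :: "'a word set"
    and D :: "('d, 'a, nat set) aut"
    and Amin :: "('q, 'a, nat set) aut"
    and k :: nat
    and S :: "nat \<Rightarrow> 'q set"
    and phi :: "nat \<Rightarrow> 'q \<Rightarrow> nat"
  assumes "prefix_independent Sig L"
    and "wf_aut Sig D" "coBuchi_aut D" "deterministic D" "lang Sig D = L"
    and "wf_aut Sig Amin" "coBuchi_aut Amin"
    and "nice Sig Amin" "safe_minimal Sig Amin" "safe_centralised Sig Amin"
    and "history_deterministic Sig Amin" "lang Sig Amin = L"
    and "\<forall>i \<in> {1..k}. safe_component Amin (S i)"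
    and "inj_on S {1..k}"
    and "\<forall>C. safe_component Amin C \<longrightarrow> C \<in> S ` {1..k}"
    and "\<forall>i \<in> {1..k}. inj_on (phi i) (S i) \<and> phi i ` S i \<subseteq> {1..Max (card ` S ` {1..k})}"
  shows "history_deterministic Sig (A_PI Sig Amin k (Max (card ` S ` {1..k})) S phi)
    \<and> lang Sig (A_PI Sig Amin k (Max (card ` S ` {1..k})) S phi) = L"
proof -
  let ?M = "Max (card ` S ` {1..k})"
  let ?f = "comp_embedding k S phi"
  obtain \<sigma> where \<sigma>: "is_resolver Sig Amin \<sigma>"
    using assms(11) unfolding history_deterministic_def by blast
  have nice: "all_reachable Amin" "normal_form Amin"
    using assms(8) unfolding nice_def by blast+
  have f_range: "?f ` states Amin \<subseteq> {1..?M}"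
    using comp_embedding_in_range[OF assms(15)] assms(16) by blast
  then have "1 \<le> ?M"
    using assms(6) unfolding wf_aut_def by fastforce
  have "is_resolver Sig (A_PI Sig Amin k ?M S phi) (PI_resolver \<sigma> ?f)
      \<and> lang Sig (A_PI Sig Amin k ?M S phi) = lang Sig Amin"
  proof (rule is_resolver_if_runs_accept)
    show "lang Sig (A_PI Sig Amin k ?M S phi) \<subseteq> lang Sig Amin"
      using lang_A_PI_subset[OF assms(7,6) nice(1)] assms(1,12,16) by blast
    show "is_run (A_PI Sig Amin k ?M S phi) w (\<lambda>t. PI_resolver \<sigma> ?f (prefix (Suc t) w))"
      if "w \<in> omega_words Sig" for w
      using PI_resolver_is_run[OF assms(6) \<sigma> f_range \<open>1 \<le> ?M\<close> that] .
    show "accepting (A_PI Sig Amin k ?M S phi) (\<lambda>t. PI_resolver \<sigma> ?f (prefix (Suc t) w))"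
      if "w \<in> lang Sig Amin" for w
      using PI_resolver_accepting[OF assms(7,6) nice(2) \<sigma> assms(13-15) that] .
  qed
  then show ?thesis
    using assms(12) unfolding history_deterministic_def by blast
qed

end
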